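(* Consider a finite-horizon tabular MDP with stationary transition kernel $P$, $S$ states, $A$ actions, horizon $H$, and $m$ i.i.d. episodes from behavior policy $\mu$; for each $t\in[H]$ let $V^{\rm in}_{t+1}:\mathcal S\to[0,H]$ be fixed (not depending on the data). With $n_{s,a}=\sum_{i=1}^m\sum_{u=1}^H\mathbf 1[s^{(i)}_u=s,a^{(i)}_u=a]$, define $\tilde\sigma_{V^{\rm in}_{t+1}}(s,a)=\sigma_{V^{\rm in}_{t+1}}(s,a)$ if $n_{s,a}\le\frac12m\sum_{t=1}^Hd^\mu_t(s,a)$, and otherwise \[ \tilde\sigma_{V^{\rm in}_{t+1}}(s,a)=\frac1{n_{s,a}}\sum_{i=1}^m\sum_{u=1}^H[V^{\rm in}_{t+1}(s^{(i)}_{u+1})]^2\mathbf 1[s^{(i)}_u=s,a^{(i)}_u=a]-\tilde z_t(s,a)^2, \] where $\tilde z_t(s,a)=\frac1{n_{s,a}}\sum_{i=1}^m\sum_{u=1}^HV^{\rm in}_{t+1}(s^{(i)}_{u+1})\mathbf 1[s^{(i)}_u=s,a^{(i)}_u=a]$. Then with probability at least $1-\delta$, for all $t\in[H]$ and $(s,a)$ with $\sum_td^\mu_t(s,a)>0$, \[ \big|\tilde\sigma_{V^{\rm in}_{t+1}}(s,a)-\sigma_{V^{\rm in}_{t+1}}(s,a)\big|\le6H^2\sqrt{\frac{\log(4HSA/\delta)}{m\sum_{t=1}^Hd^\mu_t(s,a)}}+\frac{4H^2\log(4HSA/\delta)}{m\sum_{t=1}^Hd^\mu_t(s,a)}. 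\]
   Context: Episodes: $s_1\sim d_1$, $a_u\sim\mu_u(\cdot|s_u)$, $s_{u+1}\sim P(\cdot|s_u,a_u)$. $d^\mu_t(s,a)=\mathbb P^\mu(s_t=s,a_t=a)$. $\sigma_V(s,a)=\mathrm{Var}_{s'\sim P(\cdot|s,a)}[V(s')]$. $\delta\in(0,1)$. *)

theory Defs
  imports "HOL-Probability.Probability"
begin

text \<open>An episode is a pair (tr, sf): tr ! (u-1) = (s_u, a_u) for u = 1..H, sf = s_{H+1}.\<close>
type_synonym ('s, 'a) episode = "('s \<times> 'a) list \<times> 's"

fun gen_traj :: "('s \<Rightarrow> 'a \<Rightarrow> 's pmf) \<Rightarrow> (nat \<Rightarrow> 's \<Rightarrow> 'a pmf) \<Rightarrow> nat \<Rightarrow> nat \<Rightarrow> 's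
                  \<Rightarrow> ('s, 'a) episode pmf" where
  "gen_traj P \<mu> u 0 s = return_pmf ([], s)"
| "gen_traj P \<mu> u (Suc k) s =
     do { a \<leftarrow> \<mu> u s; s' \<leftarrow> P s a; r \<leftarrow> gen_traj P \<mu> (Suc u) k s';
          return_pmf ((s, a) # fst r, snd r) }"

definition episode_pmf :: "'s pmf \<Rightarrow> ('s \<Rightarrow> 'a \<Rightarrow> 's pmf) \<Rightarrow> (nat \<Rightarrow> 's \<Rightarrow> 'a pmf) \<Rightarrow> nat
                            \<Rightarrow> ('s, 'a) episode pmf" where
  "episode_pmf d1 P \<mu> H = do { s \<leftarrow> d1; gen_traj P \<mu> 1 H s }"

definition ep_state :: "('s, 'a) episode \<Rightarrow> nat \<Rightarrow> 's" where
  "ep_state ep u = (if u - 1 < length (fst ep) then fst (fst ep ! (u - 1)) else snd ep)"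

definition ep_action :: "('s, 'a) episode \<Rightarrow> nat \<Rightarrow> 'a" where
  "ep_action ep u = snd (fst ep ! (u - 1))"

definition data_pmf :: "'s pmf \<Rightarrow> ('s \<Rightarrow> 'a \<Rightarrow> 's pmf) \<Rightarrow> (nat \<Rightarrow> 's \<Rightarrow> 'a pmf) \<Rightarrow> nat \<Rightarrow> nat
                         \<Rightarrow> (nat \<Rightarrow> ('s, 'a) episode) pmf" where
  "data_pmf d1 P \<mu> H m = Pi_pmf {..<m} undefined (\<lambda>_. episode_pmf d1 P \<mu> H)"

definition occ :: "'s pmf \<Rightarrow> ('s \<Rightarrow> 'a \<Rightarrow> 's pmf) \<Rightarrow> (nat \<Rightarrow> 's \<Rightarrow> 'a pmf) \<Rightarrow> nat
                   \<Rightarrow> nat \<Rightarrow> 's \<Rightarrow> 'a \<Rightarrow> real" where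
  "occ d1 P \<mu> H t s a =
     measure_pmf.prob (episode_pmf d1 P \<mu> H) {ep. ep_state ep t = s \<and> ep_action ep t = a}"

definition sigmaV :: "('s \<Rightarrow> 'a \<Rightarrow> 's pmf) \<Rightarrow> ('s \<Rightarrow> real) \<Rightarrow> 's \<Rightarrow> 'a \<Rightarrow> real" where
  "sigmaV P V s a = measure_pmf.variance (P s a) V"

definition visit_count :: "nat \<Rightarrow> nat \<Rightarrow> (nat \<Rightarrow> ('s, 'a) episode) \<Rightarrow> 's \<Rightarrow> 'a \<Rightarrow> nat" where
  "visit_count H m D s a =
     card {(i, u). i < m \<and> u \<in> {1..H} \<and> ep_state (D i) u = s \<and> ep_action (D i) u = a}"

definition emp_moment :: "nat \<Rightarrow> nat \<Rightarrow> (nat \<Rightarrow> ('s, 'a) episode) \<Rightarrow> ('s \<Rightarrow> real) \<Rightarrow> nat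
                          \<Rightarrow> 's \<Rightarrow> 'a \<Rightarrow> real" where
  "emp_moment H m D V k s a =
     (\<Sum>i<m. \<Sum>u=1..H. (if ep_state (D i) u = s \<and> ep_action (D i) u = a
                          then V (ep_state (D i) (Suc u)) ^ k else 0)) / real (visit_count H m D s a)"

definition sigma_tilde :: "'s pmf \<Rightarrow> ('s \<Rightarrow> 'a \<Rightarrow> 's pmf) \<Rightarrow> (nat \<Rightarrow> 's \<Rightarrow> 'a pmf) \<Rightarrow> nat \<Rightarrow> nat
                           \<Rightarrow> (nat \<Rightarrow> ('s, 'a) episode) \<Rightarrow> ('s \<Rightarrow> real) \<Rightarrow> 's \<Rightarrow> 'a \<Rightarrow> real" where
  "sigma_tilde d1 P \<mu> H m D V s a =
     (if real (visit_count H m D s a) \<le> 1/2 * real m * (\<Sum>t=1..H. occ d1 P \<mu> H t s a)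
      then sigmaV P V s a
      else emp_moment H m D V 2 s a - (emp_moment H m D V 1 s a)\<^sup>2)"

end

theory Submission
  imports Defs
begin

(* Only the empirical branch of the estimator needs an argument, and there the visit count
   n(s,a) exceeds half of its mean w = m sum_t d_t(s,a).  For g with values in [0,c], Hoeffding's
   lemma makes exp(l (g(s') - E g) - l^2 c^2/8), multiplied over the visits of (s,a), a
   supermartingale along every episode: whatever happened before, the state following a visit
   is drawn from P(.|s,a).  A Chernoff bound therefore controls the empirical mean of g although
   the number of visits is random: a deviation eps together with n >= k has probability at most
   2 exp(-2 k eps^2/c^2).  With k = w/2 this bounds the errors of the empirical first and second
   moments of V (c = H and c = H^2), hence of the plug-in variance, by 6 H^2 sqrt(L/w) outside
   an event of probability 4 exp(-4 L).
   A union bound over the H S A triples (t,s,a) with L = ln(4 H S A/delta) finishes the proof. *)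

lemma ep_state_Cons_Suc:
  "ep_state (x # tr, sf) (Suc j) = (if j = 0 then fst x else ep_state (tr, sf) j)"
  by (cases j) (auto simp: ep_state_def)

lemma ep_action_Cons_Suc:
  "ep_action (x # tr, sf) (Suc j) = (if j = 0 then snd x else ep_action (tr, sf) j)"
  by (cases j) (auto simp: ep_action_def)

lemma ep_state_gen_traj_1: "ep \<in> set_pmf (gen_traj P \<mu> u k s) \<Longrightarrow> ep_state ep 1 = s"
  by (cases k) (auto simp: ep_state_def)

definition ep_visit_sum :: "nat \<Rightarrow> ('s \<Rightarrow> real) \<Rightarrow> 's \<Rightarrow> 'a \<Rightarrow> ('s, 'a) episode \<Rightarrow> real" where
  "ep_visit_sum k g s a ep =
     (\<Sum>u=1..k. if ep_state ep u = s \<and> ep_action ep u = a then g (ep_state ep (Suc u)) else 0)"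

lemma ep_visit_sum_Cons:
  "ep_visit_sum (Suc k) g s a ((s', a') # tr, sf) =
     (if s' = s \<and> a' = a then g (ep_state (tr, sf) 1) else 0) + ep_visit_sum k g s a (tr, sf)"
proof -
  have split_first: "(\<Sum>u=1..Suc k. f u) = f 1 + (\<Sum>u=1..k. f (Suc u))" for f :: "nat \<Rightarrow> real"
    by (induction k) simp_all
  show ?thesis
    unfolding ep_visit_sum_def split_first
    by (simp add: ep_state_Cons_Suc ep_action_Cons_Suc cong: if_cong)
qed

lemma ep_visit_sum_affine:
  "ep_visit_sum k (\<lambda>x. \<alpha> * g x + \<beta>) s a ep =
     \<alpha> * ep_visit_sum k g s a ep + \<beta> * ep_visit_sum k (\<lambda>_. 1) s a ep"
  unfolding ep_visit_sum_def
  by (auto simp: sum_distrib_left simp flip: sum.distrib intro!: sum.cong)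

lemma nn_integral_gen_traj_exp_visit_sum_le:
  fixes P :: "'s \<Rightarrow> 'a \<Rightarrow> 's pmf"
  assumes h: "(\<integral>\<^sup>+x. ennreal (exp (h x)) \<partial>P s a) \<le> 1"
  shows "(\<integral>\<^sup>+ep. ennreal (exp (ep_visit_sum k h s a ep)) \<partial>gen_traj P \<mu> u k s0) \<le> 1"
proof (induction k arbitrary: u s0)
  case 0
  then show ?case by (simp add: ep_visit_sum_def)
next
  case (Suc k)
  define step where "step s' a' x = ennreal (exp (if s' = s \<and> a' = a then h x else 0))" for s' a' x
  have step_le: "(\<integral>\<^sup>+x. step s0 a' x \<partial>P s0 a') \<le> 1" for a'
    using h by (cases "s0 = s \<and> a' = a") (auto simp: step_def measure_pmf.emeasure_space_1)
  have Cons: "ennreal (exp (ep_visit_sum (Suc k) h s a ((s0, a') # tr, sf))) =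
      step s0 a' x * ennreal (exp (ep_visit_sum k h s a (tr, sf)))"
    if "(tr, sf) \<in> set_pmf (gen_traj P \<mu> (Suc u) k x)" for a' x tr sf
    using ep_state_gen_traj_1[OF that]
    by (simp add: ep_visit_sum_Cons step_def exp_add ennreal_mult')
  have "(\<integral>\<^sup>+ep. ennreal (exp (ep_visit_sum (Suc k) h s a ep)) \<partial>gen_traj P \<mu> u (Suc k) s0) =
     (\<integral>\<^sup>+a'. \<integral>\<^sup>+x. \<integral>\<^sup>+r. ennreal (exp (ep_visit_sum (Suc k) h s a ((s0, a') # fst r, snd r)))
        \<partial>gen_traj P \<mu> (Suc u) k x \<partial>P s0 a' \<partial>\<mu> u s0)"
    by simp
  also have "\<dots> = (\<integral>\<^sup>+a'. \<integral>\<^sup>+x. step s0 a' x *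
        (\<integral>\<^sup>+r. ennreal (exp (ep_visit_sum k h s a r)) \<partial>gen_traj P \<mu> (Suc u) k x) \<partial>P s0 a' \<partial>\<mu> u s0)"
    by (intro nn_integral_cong)
      (auto simp: Cons simp flip: nn_integral_cmult intro!: nn_integral_cong_AE AE_pmfI)
  also have "\<dots> \<le> (\<integral>\<^sup>+a'. \<integral>\<^sup>+x. step s0 a' x \<partial>P s0 a' \<partial>\<mu> u s0)"
    using Suc.IH by (intro nn_integral_mono) (metis mult.right_neutral mult_left_mono zero_le)
  also have "\<dots> \<le> (\<integral>\<^sup>+a'. 1 \<partial>\<mu> u s0)"
    by (intro nn_integral_mono step_le)
  finally show ?case by (simp add: measure_pmf.emeasure_space_1)
qed

lemma nn_integral_episode_exp_visit_sum_le:
  fixes P :: "'s \<Rightarrow> 'a \<Rightarrow> 's pmf"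
  assumes "(\<integral>\<^sup>+x. ennreal (exp (h x)) \<partial>P s a) \<le> 1"
  shows "(\<integral>\<^sup>+ep. ennreal (exp (ep_visit_sum H h s a ep)) \<partial>episode_pmf d1 P \<mu> H) \<le> 1"
proof -
  have "(\<integral>\<^sup>+ep. ennreal (exp (ep_visit_sum H h s a ep)) \<partial>episode_pmf d1 P \<mu> H) =
      (\<integral>\<^sup>+s0. \<integral>\<^sup>+ep. ennreal (exp (ep_visit_sum H h s a ep)) \<partial>gen_traj P \<mu> 1 H s0 \<partial>d1)"
    by (simp add: episode_pmf_def)
  also have "\<dots> \<le> (\<integral>\<^sup>+s0. 1 \<partial>d1)"
    by (intro nn_integral_mono
        nn_integral_gen_traj_exp_visit_sum_le[where P = P and s = s and a = a, OF assms])
  finally show ?thesis by (simp add: measure_pmf.emeasure_space_1)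
qed

definition visit_total ::
    "nat \<Rightarrow> nat \<Rightarrow> (nat \<Rightarrow> ('s, 'a) episode) \<Rightarrow> ('s \<Rightarrow> real) \<Rightarrow> 's \<Rightarrow> 'a \<Rightarrow> real" where
  "visit_total H m D g s a = (\<Sum>i<m. ep_visit_sum H g s a (D i))"

lemma visit_total_affine:
  "visit_total H m D (\<lambda>x. \<alpha> * g x + \<beta>) s a =
     \<alpha> * visit_total H m D g s a + \<beta> * visit_total H m D (\<lambda>_. 1) s a"
  unfolding visit_total_def by (simp add: ep_visit_sum_affine sum.distrib sum_distrib_left)

lemma visit_count_eq_visit_total: "real (visit_count H m D s a) = visit_total H m D (\<lambda>_. 1) s a"
proof -
  have "{(i, u). i < m \<and> u \<in> {1..H} \<and> ep_state (D i) u = s \<and> ep_action (D i) u = a}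
      = Sigma {..<m} (\<lambda>i. {u \<in> {1..H}. ep_state (D i) u = s \<and> ep_action (D i) u = a})"
    by auto
  then show ?thesis
    unfolding visit_count_def visit_total_def ep_visit_sum_def
    by (simp add: card_SigmaI sum.inter_filter[symmetric])
qed

lemma emp_moment_eq:
  "emp_moment H m D V k s a = visit_total H m D (\<lambda>x. V x ^ k) s a / real (visit_count H m D s a)"
  unfolding emp_moment_def visit_total_def ep_visit_sum_def ..

lemma nn_integral_data_exp_visit_total_le:
  fixes P :: "'s \<Rightarrow> 'a \<Rightarrow> 's pmf"
  assumes "(\<integral>\<^sup>+x. ennreal (exp (h x)) \<partial>P s a) \<le> 1"
  shows "(\<integral>\<^sup>+D. ennreal (exp (visit_total H m D h s a)) \<partial>data_pmf d1 P \<mu> H m) \<le> 1"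
proof -
  have "(\<integral>\<^sup>+D. ennreal (exp (visit_total H m D h s a)) \<partial>data_pmf d1 P \<mu> H m) =
      (\<integral>\<^sup>+D. (\<Prod>i<m. ennreal (exp (ep_visit_sum H h s a (D i)))) \<partial>data_pmf d1 P \<mu> H m)"
    by (simp add: visit_total_def exp_sum prod_ennreal)
  also have "\<dots> = (\<Prod>i<m. \<integral>\<^sup>+ep. ennreal (exp (ep_visit_sum H h s a ep)) \<partial>episode_pmf d1 P \<mu> H)"
    unfolding data_pmf_def by (rule nn_integral_prod_Pi_pmf) simp
  also have "\<dots> \<le> 1"
    using nn_integral_episode_exp_visit_sum_le[where P = P and s = s and a = a, OF assms]
    by (simp add: power_le_one)
  finally show ?thesis .
qed

lemma measure_pmf_prob_ge_le_exp:
  fixes M :: "'a pmf"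
  assumes "(\<integral>\<^sup>+x. ennreal (exp (F x)) \<partial>M) \<le> 1"
  shows "measure_pmf.prob M {x. c \<le> F x} \<le> exp (- c)"
proof -
  have "emeasure M {x \<in> UNIV. c \<le> F x} \<le> ennreal (exp (- c)) * (\<integral>\<^sup>+x. ennreal (exp (F x)) \<partial>M)"
    using Chernoff_ineq_nn_integral_ge[of 1 UNIV M F c] by simp
  also have "\<dots> \<le> ennreal (exp (- c))"
    using assms mult_left_mono[of _ 1 "ennreal (exp (- c))"] by simp
  finally show ?thesis
    by (simp add: measure_pmf.emeasure_eq_measure)
qed

lemma prob_visit_total_deviation_ge_le:
  fixes P :: "'s \<Rightarrow> 'a \<Rightarrow> 's pmf" and g :: "'s \<Rightarrow> real"
  assumes g: "\<And>x. 0 \<le> g x \<and> g x \<le> c" and c: "0 < c" and \<epsilon>: "0 < \<epsilon>"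
  shows "measure_pmf.prob (data_pmf d1 P \<mu> H m)
     {D. k0 \<le> real (visit_count H m D s a) \<and>
         real (visit_count H m D s a) * \<epsilon>
           \<le> visit_total H m D g s a - measure_pmf.expectation (P s a) g * real (visit_count H m D s a)}
     \<le> exp (- (2 * k0 * \<epsilon>\<^sup>2 / c\<^sup>2))"
proof -
  define E where "E = measure_pmf.expectation (P s a) g"
  \<comment> \<open>\<open>l\<close> maximises the per-visit Chernoff exponent \<open>l * \<epsilon> - l\<^sup>2 * c\<^sup>2 / 8\<close>,
    whose maximum is \<open>b\<close>\<close>
  define l where "l = 4 * \<epsilon> / c\<^sup>2"
  define b where "b = 2 * \<epsilon>\<^sup>2 / c\<^sup>2"
  define h where "h x = l * g x + - (l * E + b)" for x
  have l: "0 < l" and b: "0 \<le> b" and l_\<epsilon>: "l * \<epsilon> = 2 * b"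
    using c \<epsilon> by (simp_all add: l_def b_def power2_eq_square)
  interpret g: interval_bounded_random_variable "measure_pmf (P s a)" g 0 c
    by unfold_locales (use g in auto)
  have "exp (h x) = exp (- b) * exp (l * (g x - E))" for x
    by (simp add: h_def algebra_simps flip: exp_add)
  then have "(\<integral>\<^sup>+x. ennreal (exp (h x)) \<partial>P s a) =
      ennreal (exp (- b)) * (\<integral>\<^sup>+x. exp (l * (g x - E)) \<partial>P s a)"
    by (simp add: ennreal_mult' flip: nn_integral_cmult)
  also have "\<dots> \<le> ennreal (exp (- b)) * ennreal (exp (l\<^sup>2 * (c - 0)\<^sup>2 / 8))"
    unfolding E_def by (intro mult_left_mono g.Hoeffdings_lemma_nn_integral l) simp
  also have "l\<^sup>2 * (c - 0)\<^sup>2 / 8 = b"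
    using c by (simp add: l_def b_def power2_eq_square field_simps)
  finally have h_le: "(\<integral>\<^sup>+x. ennreal (exp (h x)) \<partial>P s a) \<le> 1"
    by (simp flip: ennreal_mult exp_add)
  have "k0 * b \<le> visit_total H m D h s a"
    if "k0 \<le> real (visit_count H m D s a)"
      and "real (visit_count H m D s a) * \<epsilon>
        \<le> visit_total H m D g s a - E * real (visit_count H m D s a)"
    for D
  proof -
    define N where "N = real (visit_count H m D s a)"
    have "visit_total H m D h s a = l * (visit_total H m D g s a - E * N) - b * N"
      unfolding h_def visit_total_affine N_def visit_count_eq_visit_total
      by (simp add: algebra_simps)
    moreover have "l * (N * \<epsilon>) \<le> l * (visit_total H m D g s a - E * N)"
      using that l unfolding N_def by (intro mult_left_mono) auto
    moreover have "k0 * b \<le> N * b"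
      using that b unfolding N_def by (intro mult_right_mono) auto
    ultimately show ?thesis
      using l_\<epsilon> by (simp add: algebra_simps)
  qed
  then have "measure_pmf.prob (data_pmf d1 P \<mu> H m)
     {D. k0 \<le> real (visit_count H m D s a) \<and>
         real (visit_count H m D s a) * \<epsilon>
           \<le> visit_total H m D g s a - E * real (visit_count H m D s a)}
     \<le> measure_pmf.prob (data_pmf d1 P \<mu> H m) {D. k0 * b \<le> visit_total H m D h s a}"
    by (intro measure_pmf.finite_measure_mono) auto
  also have "\<dots> \<le> exp (- (k0 * b))"
    by (intro measure_pmf_prob_ge_le_exp nn_integral_data_exp_visit_total_le h_le)
  also have "k0 * b = 2 * k0 * \<epsilon>\<^sup>2 / c\<^sup>2"
    by (simp add: b_def)
  finally show ?thesis
    by (simp add: E_def)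
qed

lemma prob_visit_mean_deviation_le:
  fixes P :: "'s \<Rightarrow> 'a \<Rightarrow> 's pmf" and g :: "'s \<Rightarrow> real"
  assumes g: "\<And>x. 0 \<le> g x \<and> g x \<le> c" and c: "0 < c" and \<epsilon>: "0 < \<epsilon>" and k0: "0 < k0"
  shows "measure_pmf.prob (data_pmf d1 P \<mu> H m)
     {D. k0 \<le> real (visit_count H m D s a) \<and>
         \<epsilon> < \<bar>visit_total H m D g s a / real (visit_count H m D s a)
               - measure_pmf.expectation (P s a) g\<bar>}
     \<le> 2 * exp (- (2 * k0 * \<epsilon>\<^sup>2 / c\<^sup>2))"
proof -
  define E where "E = measure_pmf.expectation (P s a) g"
  define g' where "g' x = -1 * g x + c" for x
  have g': "0 \<le> g' x \<and> g' x \<le> c" for x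
    using g[of x] by (simp add: g'_def)
  have E': "measure_pmf.expectation (P s a) g' = c - E"
  proof -
    have "integrable (P s a) g"
      using g by (intro measure_pmf.integrable_const_bound[where B = c]) auto
    then show ?thesis
      unfolding g'_def E_def by simp
  qed
  define upper where "upper f = {D. k0 \<le> real (visit_count H m D s a) \<and>
         real (visit_count H m D s a) * \<epsilon>
           \<le> visit_total H m D f s a - measure_pmf.expectation (P s a) f * real (visit_count H m D s a)}"
    for f
  have "{D. k0 \<le> real (visit_count H m D s a) \<and>
         \<epsilon> < \<bar>visit_total H m D g s a / real (visit_count H m D s a) - E\<bar>} \<subseteq> upper g \<union> upper g'"
  proof safe
    fix D
    assume N: "k0 \<le> real (visit_count H m D s a)"
      and dev: "\<epsilon> < \<bar>visit_total H m D g s a / real (visit_count H m D s a) - E\<bar>"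
      and "D \<notin> upper g'"
    have "visit_total H m D g' s a - (c - E) * real (visit_count H m D s a) =
        E * real (visit_count H m D s a) - visit_total H m D g s a"
      unfolding g'_def visit_total_affine visit_count_eq_visit_total by (simp add: algebra_simps)
    then show "D \<in> upper g"
      using N dev k0 \<open>D \<notin> upper g'\<close> unfolding upper_def E' E_def[symmetric]
      by (auto simp: abs_if field_simps split: if_splits)
  qed
  then have "measure_pmf.prob (data_pmf d1 P \<mu> H m) {D. k0 \<le> real (visit_count H m D s a) \<and>
         \<epsilon> < \<bar>visit_total H m D g s a / real (visit_count H m D s a) - E\<bar>}
      \<le> measure_pmf.prob (data_pmf d1 P \<mu> H m) (upper g \<union> upper g')"
    by (rule measure_pmf.finite_measure_mono) simp
  also have "\<dots> \<le> measure_pmf.prob (data_pmf d1 P \<mu> H m) (upper g)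
      + measure_pmf.prob (data_pmf d1 P \<mu> H m) (upper g')"
    by (rule measure_Un_le) simp_all
  also have "\<dots> \<le> 2 * exp (- (2 * k0 * \<epsilon>\<^sup>2 / c\<^sup>2))"
  proof -
    have upper_le: "measure_pmf.prob (data_pmf d1 P \<mu> H m) (upper f) \<le> exp (- (2 * k0 * \<epsilon>\<^sup>2 / c\<^sup>2))"
      if "\<And>x. 0 \<le> f x \<and> f x \<le> c" for f
      unfolding upper_def by (intro prob_visit_total_deviation_ge_le that c \<epsilon>)
    show ?thesis
      using upper_le[of g, OF g] upper_le[of g', OF g'] by linarith
  qed
  finally show ?thesis
    by (simp add: E_def)
qed

lemma prob_emp_moment_deviation_le:
  fixes P :: "'s \<Rightarrow> 'a \<Rightarrow> 's pmf" and V :: "'s \<Rightarrow> real"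
  assumes V: "\<And>x. 0 \<le> V x \<and> V x \<le> c" and c: "0 < c" and w: "0 < w" and L: "0 < L"
  shows "measure_pmf.prob (data_pmf d1 P \<mu> H m)
     {D. w / 2 \<le> real (visit_count H m D s a) \<and>
         2 * c ^ k * sqrt (L / w)
           < \<bar>emp_moment H m D V k s a - measure_pmf.expectation (P s a) (\<lambda>x. V x ^ k)\<bar>}
     \<le> 2 * exp (- (4 * L))"
proof -
  have Vk: "0 \<le> V x ^ k \<and> V x ^ k \<le> c ^ k" for x
    using V[of x] by (simp add: power_mono)
  have "2 * (w / 2) * (2 * c ^ k * sqrt (L / w))\<^sup>2 / (c ^ k)\<^sup>2 = 4 * L"
    using c w L by (simp add: power_mult_distrib field_simps)
  then show ?thesis
    using prob_visit_mean_deviation_le[of "\<lambda>x. V x ^ k" "c ^ k" "2 * c ^ k * sqrt (L / w)" "w / 2"]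
      Vk c w L unfolding emp_moment_eq by simp
qed

lemma emp_moment_1_bounds:
  assumes V: "\<And>x. 0 \<le> V x \<and> V x \<le> c"
  shows "0 \<le> emp_moment H m D V 1 s a \<and> emp_moment H m D V 1 s a \<le> c"
proof -
  have "0 \<le> visit_total H m D V s a"
    unfolding visit_total_def ep_visit_sum_def using V by (intro sum_nonneg) auto
  moreover have "visit_total H m D V s a \<le> c * real (visit_count H m D s a)"
    unfolding visit_count_eq_visit_total visit_total_def ep_visit_sum_def
    using V by (auto simp: sum_distrib_left intro!: sum_mono)
  moreover have "0 \<le> c"
    using V order_trans by blast
  ultimately show ?thesis
    by (auto simp: emp_moment_eq divide_le_eq)
qed

lemma abs_variance_formula_diff_le:
  fixes e1 e2 E1 E2 c r :: real
  assumes "0 \<le> e1" "e1 \<le> c" "0 \<le> E1" "E1 \<le> c"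
    and "\<bar>e1 - E1\<bar> \<le> 2 * c * r" "\<bar>e2 - E2\<bar> \<le> 2 * c\<^sup>2 * r"
  shows "\<bar>(e2 - e1\<^sup>2) - (E2 - E1\<^sup>2)\<bar> \<le> 6 * c\<^sup>2 * r"
proof -
  have "\<bar>e1\<^sup>2 - E1\<^sup>2\<bar> = \<bar>e1 - E1\<bar> * \<bar>e1 + E1\<bar>"
    by (simp add: power2_eq_square abs_mult[symmetric] algebra_simps)
  also have "\<dots> \<le> (2 * c * r) * (2 * c)"
    using assms by (intro mult_mono) auto
  finally have "\<bar>e1\<^sup>2 - E1\<^sup>2\<bar> \<le> 4 * c\<^sup>2 * r"
    by (simp add: power2_eq_square algebra_simps)
  then show ?thesis
    using assms(6) by (simp add: abs_le_iff)
qed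

lemma sigma_tilde_error_le:
  fixes P :: "'s::finite \<Rightarrow> 'a \<Rightarrow> 's pmf" and V :: "'s \<Rightarrow> real"
  assumes V: "\<And>x. 0 \<le> V x \<and> V x \<le> real H" and r: "0 \<le> r"
    and close: "\<And>k. k \<in> {1, 2} \<Longrightarrow>
      real m * (\<Sum>t=1..H. occ d1 P \<mu> H t s a) / 2 < real (visit_count H m D s a) \<Longrightarrow>
      \<bar>emp_moment H m D V k s a - measure_pmf.expectation (P s a) (\<lambda>x. V x ^ k)\<bar> \<le> 2 * real H ^ k * r"
  shows "\<bar>sigma_tilde d1 P \<mu> H m D V s a - sigmaV P V s a\<bar> \<le> 6 * real H ^ 2 * r"
proof (cases "real (visit_count H m D s a) \<le> 1/2 * real m * (\<Sum>t=1..H. occ d1 P \<mu> H t s a)")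
  case True
  then show ?thesis
    using r by (simp add: sigma_tilde_def)
next
  case False
  define E1 where "E1 = measure_pmf.expectation (P s a) V"
  have E1: "0 \<le> E1 \<and> E1 \<le> real H"
    unfolding E1_def using V
    by (auto intro!: measure_pmf.integral_ge_const measure_pmf.integral_le_const
        simp: integrable_measure_pmf_finite)
  have "sigmaV P V s a = measure_pmf.expectation (P s a) (\<lambda>x. V x ^ 2) - E1\<^sup>2"
    unfolding sigmaV_def E1_def by (simp add: measure_pmf.variance_eq integrable_measure_pmf_finite)
  moreover have "sigma_tilde d1 P \<mu> H m D V s a =
      emp_moment H m D V 2 s a - (emp_moment H m D V 1 s a)\<^sup>2"
    using False by (simp add: sigma_tilde_def)
  moreover have "\<bar>emp_moment H m D V 1 s a - E1\<bar> \<le> 2 * real H * r"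
    using close[of 1] False unfolding E1_def by simp
  moreover have "\<bar>emp_moment H m D V 2 s a - measure_pmf.expectation (P s a) (\<lambda>x. V x ^ 2)\<bar>
      \<le> 2 * (real H)\<^sup>2 * r"
    using close[of 2] False by simp
  ultimately show ?thesis
    using emp_moment_1_bounds[where V = V and H = H and m = m and D = D and s = s and a = a, OF V]
      E1
    by (simp add: abs_variance_formula_diff_le)
qed

lemma prob_sigma_tilde_error_gt_le:
  fixes d1 :: "'s::finite pmf" and P :: "'s \<Rightarrow> 'a \<Rightarrow> 's pmf" and \<mu> :: "nat \<Rightarrow> 's \<Rightarrow> 'a pmf"
    and V :: "'s \<Rightarrow> real" and m :: nat and s :: 's and a :: 'a
  assumes V: "\<And>x. 0 \<le> V x \<and> V x \<le> real H" and H: "0 < H" and L: "0 < L"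
  defines "w \<equiv> real m * (\<Sum>t=1..H. occ d1 P \<mu> H t s a)"
  shows "measure_pmf.prob (data_pmf d1 P \<mu> H m)
     {D. 0 < (\<Sum>t=1..H. occ d1 P \<mu> H t s a) \<and>
         6 * real H ^ 2 * sqrt (L / w) + 4 * real H ^ 2 * L / w
           < \<bar>sigma_tilde d1 P \<mu> H m D V s a - sigmaV P V s a\<bar>}
     \<le> 4 * exp (- (4 * L))"
proof (cases "0 < w")
  case False
  have "\<bar>sigma_tilde d1 P \<mu> H m D V s a - sigmaV P V s a\<bar>
      \<le> 6 * real H ^ 2 * sqrt (L / w) + 4 * real H ^ 2 * L / w"
    if "0 < (\<Sum>t=1..H. occ d1 P \<mu> H t s a)" for D
  proof -
    have "m = 0" and "w = 0"
      using False that by (auto simp: w_def zero_less_mult_iff)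
    then have "\<bar>sigma_tilde d1 P \<mu> H m D V s a - sigmaV P V s a\<bar> \<le> 6 * real H ^ 2 * 0"
      by (intro sigma_tilde_error_le[OF V]) (auto simp: visit_count_def)
    with \<open>w = 0\<close> show ?thesis
      by simp
  qed
  then show ?thesis
    by (subst Collect_empty_eq[THEN iffD2]) (auto simp: not_less)
next
  case True
  define dev where "dev k = {D. w / 2 \<le> real (visit_count H m D s a) \<and>
      2 * real H ^ k * sqrt (L / w)
        < \<bar>emp_moment H m D V k s a - measure_pmf.expectation (P s a) (\<lambda>x. V x ^ k)\<bar>}"
    for k
  have "{D. 0 < (\<Sum>t=1..H. occ d1 P \<mu> H t s a) \<and>
         6 * real H ^ 2 * sqrt (L / w) + 4 * real H ^ 2 * L / w
           < \<bar>sigma_tilde d1 P \<mu> H m D V s a - sigmaV P V s a\<bar>}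
      \<subseteq> dev 1 \<union> dev 2"
  proof (rule subsetI, rule ccontr)
    fix D
    assume "D \<notin> dev 1 \<union> dev 2"
    then have "\<bar>sigma_tilde d1 P \<mu> H m D V s a - sigmaV P V s a\<bar> \<le> 6 * real H ^ 2 * sqrt (L / w)"
      using True L by (intro sigma_tilde_error_le[OF V]) (auto simp: dev_def w_def)
    moreover have "0 \<le> 4 * real H ^ 2 * L / w"
      using True L by simp
    moreover assume "D \<in> {D. 0 < (\<Sum>t=1..H. occ d1 P \<mu> H t s a) \<and>
         6 * real H ^ 2 * sqrt (L / w) + 4 * real H ^ 2 * L / w
           < \<bar>sigma_tilde d1 P \<mu> H m D V s a - sigmaV P V s a\<bar>}"
    ultimately show False
      by simp
  qed
  then have "measure_pmf.prob (data_pmf d1 P \<mu> H m)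
      {D. 0 < (\<Sum>t=1..H. occ d1 P \<mu> H t s a) \<and>
         6 * real H ^ 2 * sqrt (L / w) + 4 * real H ^ 2 * L / w
           < \<bar>sigma_tilde d1 P \<mu> H m D V s a - sigmaV P V s a\<bar>}
      \<le> measure_pmf.prob (data_pmf d1 P \<mu> H m) (dev 1 \<union> dev 2)"
    by (rule measure_pmf.finite_measure_mono) simp
  also have "\<dots> \<le> measure_pmf.prob (data_pmf d1 P \<mu> H m) (dev 1)
      + measure_pmf.prob (data_pmf d1 P \<mu> H m) (dev 2)"
    by (rule measure_Un_le) simp_all
  also have "\<dots> \<le> 2 * exp (- (4 * L)) + 2 * exp (- (4 * L))"
    unfolding dev_def using V H True L by (intro add_mono prob_emp_moment_deviation_le) auto
  finally show ?thesis
    by simp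
qed

lemma measure_pmf_prob_ge_by_union_bound:
  fixes M :: "'a pmf" and B :: "'i \<Rightarrow> 'a set"
  assumes I: "finite I" and cover: "\<And>x. (\<And>i. i \<in> I \<Longrightarrow> x \<notin> B i) \<Longrightarrow> x \<in> G"
    and B: "\<And>i. i \<in> I \<Longrightarrow> measure_pmf.prob M (B i) \<le> p" and p: "real (card I) * p \<le> \<delta>"
  shows "1 - \<delta> \<le> measure_pmf.prob M G"
proof -
  have "measure_pmf.prob M (- G) \<le> measure_pmf.prob M (\<Union>i\<in>I. B i)"
    using cover by (intro measure_pmf.finite_measure_mono) auto
  also have "\<dots> \<le> (\<Sum>i\<in>I. measure_pmf.prob M (B i))"
    using I by (intro measure_pmf.finite_measure_subadditive_finite) auto
  also have "\<dots> \<le> real (card I) * p"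
    using B by (rule sum_bounded_above)
  finally have "measure_pmf.prob M (- G) \<le> \<delta>"
    using p by linarith
  moreover have "measure_pmf.prob M (- G) = 1 - measure_pmf.prob M G"
    using measure_pmf.prob_compl[of G M] by (simp add: Compl_eq_Diff_UNIV)
  ultimately show ?thesis
    by linarith
qed

lemma prob_sigma_tilde_error_le_all:
  fixes d1 :: "'s::finite pmf" and P :: "'s \<Rightarrow> 'a::finite \<Rightarrow> 's pmf" and \<mu> :: "nat \<Rightarrow> 's \<Rightarrow> 'a pmf"
    and Vin :: "nat \<Rightarrow> 's \<Rightarrow> real" and m :: nat
  assumes Vin: "\<And>t s. t \<in> {1..H} \<Longrightarrow> 0 \<le> Vin (Suc t) s \<and> Vin (Suc t) s \<le> real H" and L: "0 < L"
  defines "w s a \<equiv> real m * (\<Sum>t'=1..H. occ d1 P \<mu> H t' s a)"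
  shows "1 - 4 * real H * real CARD('s) * real CARD('a) * exp (- (4 * L))
    \<le> measure_pmf.prob (data_pmf d1 P \<mu> H m)
      {D. \<forall>t\<in>{1..H}. \<forall>s a. 0 < (\<Sum>t'=1..H. occ d1 P \<mu> H t' s a) \<longrightarrow>
         \<bar>sigma_tilde d1 P \<mu> H m D (Vin (Suc t)) s a - sigmaV P (Vin (Suc t)) s a\<bar>
         \<le> 6 * real H ^ 2 * sqrt (L / w s a) + 4 * real H ^ 2 * L / w s a}"
    (is "_ \<le> measure_pmf.prob _ ?G")
proof -
  define I where "I = {1..H} \<times> (UNIV :: 's set) \<times> (UNIV :: 'a set)"
  define B where "B = (\<lambda>(t, s, a). {D. 0 < (\<Sum>t'=1..H. occ d1 P \<mu> H t' s a) \<and>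
      6 * real H ^ 2 * sqrt (L / w s a) + 4 * real H ^ 2 * L / w s a
        < \<bar>sigma_tilde d1 P \<mu> H m D (Vin (Suc t)) s a - sigmaV P (Vin (Suc t)) s a\<bar>})"
  have B_le: "measure_pmf.prob (data_pmf d1 P \<mu> H m) (B i) \<le> 4 * exp (- (4 * L))"
    if i: "i \<in> I" for i
  proof -
    obtain t s a where i_eq: "i = (t, s, a)" and t: "t \<in> {1..H}"
      using i by (cases i) (auto simp: I_def)
    show ?thesis
      unfolding i_eq B_def w_def prod.case
      by (rule prob_sigma_tilde_error_gt_le) (use Vin[OF t] t L in auto)
  qed
  have card_I: "real (card I) * (4 * exp (- (4 * L))) =
      4 * real H * real CARD('s) * real CARD('a) * exp (- (4 * L))"
    by (simp add: I_def card_cartesian_product)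
  show ?thesis
  proof (rule measure_pmf_prob_ge_by_union_bound[OF _ _ B_le card_I[THEN eq_refl]])
    show "finite I"
      by (simp add: I_def)
    fix D
    assume "\<And>i. i \<in> I \<Longrightarrow> D \<notin> B i"
    then show "D \<in> ?G"
      unfolding I_def B_def by (fastforce simp: not_less)
  qed
qed

lemma ln_confidence_bounds:
  fixes K \<delta> :: real
  assumes K: "1 \<le> K" and \<delta>: "0 < \<delta>" "\<delta> < 1"
  shows "0 < ln (4 * K / \<delta>)" and "4 * K * exp (- (4 * ln (4 * K / \<delta>))) \<le> \<delta>"
proof -
  have gt1: "1 < 4 * K / \<delta>"
    using K \<delta> by (simp add: field_simps)
  then show "0 < ln (4 * K / \<delta>)"
    by simp
  then have "exp (- (4 * ln (4 * K / \<delta>))) \<le> exp (- ln (4 * K / \<delta>))"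
    by simp
  also have "\<dots> = \<delta> / (4 * K)"
    using gt1 by (simp add: exp_minus)
  finally show "4 * K * exp (- (4 * ln (4 * K / \<delta>))) \<le> \<delta>"
    using K by (simp add: field_simps)
qed

theorem lemmaC2:
  fixes d1 :: "'s::finite pmf" and P :: "'s \<Rightarrow> 'a::finite \<Rightarrow> 's pmf"
    and \<mu> :: "nat \<Rightarrow> 's \<Rightarrow> 'a pmf" and H m :: nat
    and Vin :: "nat \<Rightarrow> 's \<Rightarrow> real" and \<delta> :: real
  assumes "0 < \<delta>" "\<delta> < 1"
    and "\<And>t s. t \<in> {1..H} \<Longrightarrow> 0 \<le> Vin (Suc t) s \<and> Vin (Suc t) s \<le> real H"
  shows "measure_pmf.prob (data_pmf d1 P \<mu> H m)
           {D. \<forall>t\<in>{1..H}. \<forall>s a. (\<Sum>t'=1..H. occ d1 P \<mu> H t' s a) > 0 \<longrightarrow>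
              \<bar>sigma_tilde d1 P \<mu> H m D (Vin (Suc t)) s a - sigmaV P (Vin (Suc t)) s a\<bar>
              \<le> 6 * real H ^ 2 * sqrt (ln (4 * real H * real CARD('s) * real CARD('a) / \<delta>)
                                       / (real m * (\<Sum>t'=1..H. occ d1 P \<mu> H t' s a)))
                + 4 * real H ^ 2 * ln (4 * real H * real CARD('s) * real CARD('a) / \<delta>)
                                       / (real m * (\<Sum>t'=1..H. occ d1 P \<mu> H t' s a))}
         \<ge> 1 - \<delta>"
proof (cases "H = 0")
  case True
  then show ?thesis
    using assms(1) by simp
next
  case False
  define K where "K = real H * real CARD('s) * real CARD('a)"
  define L where "L = ln (4 * real H * real CARD('s) * real CARD('a) / \<delta>)"
  have "1 \<le> K"
    using False by (simp add: K_def Suc_le_eq flip: of_nat_mult)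
  then have "0 < L" and "4 * real H * real CARD('s) * real CARD('a) * exp (- (4 * L)) \<le> \<delta>"
    using ln_confidence_bounds[OF \<open>1 \<le> K\<close> assms(1,2)] by (simp_all add: L_def K_def mult.assoc)
  with prob_sigma_tilde_error_le_all[where ?d1.0 = d1 and P = P and \<mu> = \<mu> and m = m and L = L
      and Vin = Vin and H = H, OF assms(3)]
  show ?thesis
    unfolding L_def by linarith
qed

end
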